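(* Let $0<q<1$, let $r\ge1$, $s\ge1$ be integers with $r-1\le s$, and $\alpha\in\mathbb{R}\setminus\mathbb{Z}_-$. Let $a_j>0$ real and $b_j\in\mathbb{C}$ ($j=1,\dots,r-1$), and $c_\ell>0$ real and $d_\ell\in\mathbb{C}$ ($\ell=1,\dots,s-1$), with $a_jn+\mathrm{Re}(b_j)\notin\mathbb{Z}_-$ and $c_\ell n+\mathrm{Re}(d_\ell)\notin\mathbb{Z}_-$ for all positive integers $n$ (when $r=1$ there are no $a_j,b_j$; when $s=1$ there are no $c_\ell,d_\ell$; empty products equal $1$). Put $A=\dfrac{\prod_{j=1}^{r-1}[a_j]_q}{\prod_{\ell=1}^{s-1}[c_\ell]_q}$ and $$\lambda_n=\frac{q^{n+\alpha}\prod_{\ell=1}^{s-1}[n]_{q^{c_\ell}}}{[n]_q\prod_{j=1}^{r-1}[n]_{q^{a_j}}}(q-1).$$ Then for every $z\in\mathbb{C}$, $$\lim_{n\to+\infty}{}_r\phi_s\!\left(\begin{array}{c}q^{-n},q^{a_1n+b_1},\dots,q^{a_{r-1}n+b_{r-1}}\\ q^{\alpha},q^{c_1n+d_1},\dots,q^{c_{s-1}n+d_{s-1}}\end{array};q,\lambda_n z\right)=\sum_{k=0}^{\infty}(-1)^{(1+r-s)k}q^{(2+s-r)\binom k2}A^k\frac{z^k q^{\alpha k}(1-q)^{(2+r-s)k}}{(q^{\alpha};q)_k(q;q)_k}.$$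
   Context: $\mathbb{Z}_-=\{0,-1,-2,\dots\}$. For $w\in\mathbb{C}$, $q^{w}:=e^{w\ln q}$. For $a\in\mathbb{C}$: $(a;q)_0=1$, $(a;q)_k=\prod_{j=0}^{k-1}(1-aq^{j})$, and $(a_1,\dots,a_r;q)_k=\prod_{i=1}^r(a_i;q)_k$. The $q$-number is $[z]_q=\dfrac{1-q^{z}}{1-q}$, and $[n]_{q^{a}}=\dfrac{1-q^{an}}{1-q^{a}}$. The basic hypergeometric series is $${}_r\phi_s\!\left(\begin{array}{c}a_1,\dots,a_r\\ b_1,\dots,b_s\end{array};q,z\right)=\sum_{k=0}^{\infty}\frac{(a_1,\dots,a_r;q)_k}{(b_1,\dots,b_s;q)_k}(-1)^{(1+s-r)k}q^{(1+s-r)\binom{k}{2}}\frac{z^k}{(q;q)_k};$$ when one numerator parameter is $q^{-n}$ it is a polynomial in $z$ of degree at most $n$. *)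

theory Defs
  imports "HOL-Analysis.Analysis"
begin

definition qpow :: "real \<Rightarrow> complex \<Rightarrow> complex" where
  "qpow q w = exp (w * complex_of_real (ln q))"

definition qpoch :: "complex \<Rightarrow> real \<Rightarrow> nat \<Rightarrow> complex" where
  "qpoch a q k = (\<Prod>j<k. 1 - a * complex_of_real q ^ j)"

definition qpoch_list :: "complex list \<Rightarrow> real \<Rightarrow> nat \<Rightarrow> complex" where
  "qpoch_list as q k = (\<Prod>a\<leftarrow>as. qpoch a q k)"

definition qnum :: "real \<Rightarrow> real \<Rightarrow> real" where
  "qnum q z = (1 - q powr z) / (1 - q)"

definition qhyp :: "complex list \<Rightarrow> complex list \<Rightarrow> real \<Rightarrow> complex \<Rightarrow> complex" where
  "qhyp as bs q z =
     (\<Sum>k. qpoch_list as q k / qpoch_list bs q k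
        * (-1) powi ((1 + int (length bs) - int (length as)) * int k)
        * complex_of_real (q powi ((1 + int (length bs) - int (length as)) * int (k choose 2)))
        * z ^ k / qpoch (complex_of_real q) q k)"

end

(*
  The argument of the series is q^n \<mu>_n z, where \<mu>_n = \<lambda>_n / q^n converges because
  [n]_{q^c} \<rightarrow> 1/(1 - q^c). Absorbing q^{nk} into the terminating symbol gives
  (q^{-n};q)_k q^{nk} = \<Prod>_{j<k} (q^n - q^j), which tends to (-1)^k q^{binom k 2} and is bounded by
  q^{binom k 2} uniformly in n. The other parameters q^{a_j n + b_j}, q^{c_l n + d_l} tend to 0, so
  their q-Pochhammer symbols tend to 1 and eventually lie between (1/2)^k and 2^k. Since r - 1 \<le> s,
  the Gaussian factor q^{binom k 2} then dominates all terms by one summable sequence, and Tannery's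
  theorem lets the limit pass inside the sum.
*)

theory Submission
  imports Defs
begin

lemma qpow_of_real: "0 < q \<Longrightarrow> qpow q (complex_of_real x) = complex_of_real (q powr x)"
  by (simp add: qpow_def powr_def exp_of_real[symmetric])

lemma norm_qpow: "0 < q \<Longrightarrow> norm (qpow q w) = q powr Re w"
  by (simp add: qpow_def powr_def norm_exp_eq_Re)

lemma qpow_minus_of_nat: "0 < q \<Longrightarrow> qpow q (- of_nat n) = inverse (complex_of_real q ^ n)"
  using qpow_of_real[of q "- real n"] by (simp add: powr_minus powr_realpow)

lemma tendsto_qpow_linear:
  assumes "0 < q" "q < 1" "0 < a"
  shows "(\<lambda>n. qpow q (complex_of_real a * of_nat n + b)) \<longlonglongrightarrow> 0"
proof (rule tendsto_norm_zero_cancel)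
  have "q powr a < 1"
    using assms powr_less_mono2[of a q 1] by simp
  then have "(\<lambda>n. q powr Re b * (q powr a) ^ n) \<longlonglongrightarrow> q powr Re b * 0"
    by (intro tendsto_intros LIMSEQ_power_zero) simp
  moreover have "norm (qpow q (complex_of_real a * of_nat n + b)) = q powr Re b * (q powr a) ^ n" for n
    using assms by (simp add: norm_qpow powr_add powr_powr flip: powr_realpow)
  ultimately show "(\<lambda>n. norm (qpow q (complex_of_real a * of_nat n + b))) \<longlonglongrightarrow> 0"
    by simp
qed

lemma qpoch_0 [simp]: "qpoch x q 0 = 1"
  by (simp add: qpoch_def)

lemma qpoch_Suc: "qpoch x q (Suc k) = qpoch x q k * (1 - x * complex_of_real q ^ k)"
  by (simp add: qpoch_def)

lemma qpoch_zero_left [simp]: "qpoch 0 q k = 1"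
  by (simp add: qpoch_def)

lemma qpoch_add: "qpoch x q (m + k) = qpoch x q m * qpoch (x * complex_of_real q ^ m) q k"
  by (induction k) (simp_all add: qpoch_Suc power_add mult_ac)

lemma tendsto_qpoch [tendsto_intros]:
  "(f \<longlongrightarrow> x) F \<Longrightarrow> ((\<lambda>n. qpoch (f n) q k) \<longlongrightarrow> qpoch x q k) F"
  unfolding qpoch_def by (intro tendsto_intros)

lemma norm_qpoch_le:
  assumes "0 \<le> q" "q \<le> 1"
  shows "norm (qpoch x q k) \<le> (1 + norm x) ^ k"
proof -
  have "norm (1 - x * complex_of_real q ^ j) \<le> 1 + norm x" for j
  proof -
    have "norm (1 - x * complex_of_real q ^ j) \<le> 1 + norm x * q ^ j"
      using norm_triangle_ineq4[of 1 "x * complex_of_real q ^ j"] assms by (simp add: norm_mult norm_power)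
    also have "\<dots> \<le> 1 + norm x"
      using assms by (simp add: mult_left_le power_le_one)
    finally show ?thesis .
  qed
  then have "(\<Prod>j<k. norm (1 - x * complex_of_real q ^ j)) \<le> (\<Prod>j<k. 1 + norm x)"
    by (intro prod_mono) auto
  then show ?thesis
    by (simp add: qpoch_def prod_norm)
qed

lemma norm_qpoch_ge:
  assumes "0 \<le> q" "q \<le> 1" "norm x \<le> 1/2"
  shows "(1/2) ^ k \<le> norm (qpoch x q k)"
proof -
  have "1/2 \<le> norm (1 - x * complex_of_real q ^ j)" for j
  proof -
    have "norm x * q ^ j \<le> 1/2"
      using assms mult_left_le[of "q ^ j" "norm x"] by (simp add: power_le_one)
    then show ?thesis
      using norm_triangle_ineq2[of 1 "x * complex_of_real q ^ j"] assms by (simp add: norm_mult norm_power)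
  qed
  then have "(\<Prod>j<k. 1/2::real) \<le> (\<Prod>j<k. norm (1 - x * complex_of_real q ^ j))"
    by (intro prod_mono) auto
  then show ?thesis
    by (simp add: qpoch_def prod_norm)
qed

lemma qpoch_lower_bound:
  assumes "0 \<le> q" "q < 1" and nz: "\<And>j. x * complex_of_real q ^ j \<noteq> 1"
  obtains m where "m > 0" "\<And>k. m * (1/2) ^ k \<le> norm (qpoch x q k)"
proof -
  have "(\<lambda>j. norm x * q ^ j) \<longlonglongrightarrow> norm x * 0"
    using assms by (intro tendsto_intros LIMSEQ_power_zero) auto
  then have "eventually (\<lambda>j. norm x * q ^ j < 1/2) sequentially"
    by (intro order_tendstoD) auto
  then obtain J where J: "norm x * q ^ J \<le> 1/2"
    unfolding eventually_sequentially by (meson less_imp_le order_refl)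
  define m where "m = Min ((\<lambda>k. norm (qpoch x q k)) ` {..J})"
  have "m > 0"
    using nz by (auto simp: m_def Min_gr_iff qpoch_def)
  moreover have "m * (1/2) ^ k \<le> norm (qpoch x q k)" for k
  proof (cases "k \<le> J")
    case True
    then have "m \<le> norm (qpoch x q k)"
      by (auto simp: m_def intro: Min_le)
    moreover have "(1/2::real) ^ k \<le> 1"
      by (simp add: power_le_one)
    ultimately show ?thesis
      using \<open>m > 0\<close> by (metis dual_order.trans mult_left_le order.strict_implies_order)
  next
    case False
    then obtain i where k: "k = J + i"
      by (metis le_add_diff_inverse nle_le)
    have "m * (1/2) ^ k \<le> norm (qpoch x q J) * (1/2) ^ i"
      using \<open>m > 0\<close> by (intro mult_mono) (auto simp: k m_def power_add power_le_one mult_left_le_one_le intro: Min_le)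
    also have "\<dots> \<le> norm (qpoch x q J) * norm (qpoch (x * complex_of_real q ^ J) q i)"
      using assms J by (intro mult_left_mono norm_qpoch_ge) (auto simp: norm_mult norm_power)
    finally show ?thesis
      by (simp add: k qpoch_add norm_mult)
  qed
  ultimately show ?thesis
    using that by blast
qed

lemma qpoch_list_Nil [simp]: "qpoch_list [] q k = 1"
  by (simp add: qpoch_list_def)

lemma qpoch_list_Cons [simp]: "qpoch_list (x # xs) q k = qpoch x q k * qpoch_list xs q k"
  by (simp add: qpoch_list_def)

lemma tendsto_qpoch_list_zero:
  assumes "\<And>j. j \<in> set js \<Longrightarrow> (X j \<longlongrightarrow> 0) F"
  shows "((\<lambda>n. qpoch_list (map (\<lambda>j. X j n) js) q k) \<longlongrightarrow> 1) F"
  using assms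
proof (induction js)
  case (Cons j js)
  then have "((\<lambda>n. qpoch (X j n) q k * qpoch_list (map (\<lambda>j. X j n) js) q k) \<longlongrightarrow> qpoch 0 q k * 1) F"
    by (intro tendsto_intros) auto
  then show ?case
    by simp
qed simp

lemma norm_qpoch_list_le:
  assumes "0 \<le> q" "q \<le> 1" "\<And>x. x \<in> set xs \<Longrightarrow> norm x \<le> 1"
  shows "norm (qpoch_list xs q k) \<le> (2 ^ length xs) ^ k"
  using assms(3)
proof (induction xs)
  case (Cons x xs)
  have "norm (qpoch x q k) \<le> 2 ^ k"
    using norm_qpoch_le[OF assms(1,2), of x k] Cons.prems power_mono[of "1 + norm x" 2 k] by simp
  with Cons show ?case
    by (simp add: norm_mult power_mult_distrib mult_mono)
qed simp

lemma norm_qpoch_list_ge: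
  assumes "0 \<le> q" "q \<le> 1" "\<And>x. x \<in> set xs \<Longrightarrow> norm x \<le> 1/2"
  shows "(1/2) ^ (length xs * k) \<le> norm (qpoch_list xs q k)"
  using assms(3)
proof (induction xs)
  case (Cons x xs)
  have "(1/2) ^ k \<le> norm (qpoch x q k)"
    using norm_qpoch_ge[OF assms(1,2)] Cons.prems by simp
  with Cons show ?case
    by (simp add: norm_mult power_add mult_mono)
qed simp

lemma prod_power_lessThan: "(\<Prod>j<k. x ^ j) = (x::'a::comm_monoid_mult) ^ (k choose 2)"
proof (induction k)
  case (Suc k)
  have "Suc k choose 2 = k + (k choose 2)"
    using binomial_Suc_Suc[of k 1] by (simp add: numeral_2_eq_2)
  with Suc show ?case
    by (simp add: power_add mult.commute)
qed (simp add: numeral_2_eq_2)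

lemma qpoch_inverse_mult_power:
  assumes "x \<noteq> 0"
  shows "qpoch (inverse x) q k * x ^ k = (\<Prod>j<k. x - complex_of_real q ^ j)"
proof -
  have "qpoch (inverse x) q k * x ^ k = (\<Prod>j<k. (1 - inverse x * complex_of_real q ^ j) * x)"
    by (simp add: qpoch_def prod.distrib)
  also have "\<dots> = (\<Prod>j<k. x - complex_of_real q ^ j)"
    using assms by (intro prod.cong) (auto simp: algebra_simps)
  finally show ?thesis .
qed

lemma norm_prod_power_diff_le:
  assumes "0 \<le> q" "q \<le> 1"
  shows "norm (\<Prod>j<k. complex_of_real q ^ n - complex_of_real q ^ j) \<le> q ^ (k choose 2)"
proof (cases "k \<le> n")
  case True
  have "norm (complex_of_real q ^ n - complex_of_real q ^ j) \<le> q ^ j" if "j < k" for j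
  proof -
    have "q ^ n \<le> q ^ j"
      using that True assms by (intro power_decreasing) auto
    then show ?thesis
      using assms by (simp flip: of_real_power of_real_diff)
  qed
  then have "(\<Prod>j<k. norm (complex_of_real q ^ n - complex_of_real q ^ j)) \<le> (\<Prod>j<k. q ^ j)"
    by (intro prod_mono) auto
  then show ?thesis
    by (simp add: prod_norm prod_power_lessThan)
next
  case False
  then have "(\<Prod>j<k. complex_of_real q ^ n - complex_of_real q ^ j) = 0"
    by (intro prod_zero) auto
  then show ?thesis
    using assms by (metis norm_zero zero_le_power)
qed

lemma tendsto_prod_power_diff:
  assumes "\<bar>q\<bar> < 1"
  shows "(\<lambda>n. \<Prod>j<k. complex_of_real q ^ n - complex_of_real q ^ j)
    \<longlonglongrightarrow> (-1) ^ k * complex_of_real q ^ (k choose 2)"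
proof -
  have "(\<lambda>n. \<Prod>j<k. complex_of_real q ^ n - complex_of_real q ^ j) \<longlonglongrightarrow> (\<Prod>j<k. 0 - complex_of_real q ^ j)"
    using assms by (intro tendsto_intros) auto
  then show ?thesis
    by (simp add: prod_uminus prod_power_lessThan)
qed

lemma summable_power_choose_two:
  assumes "0 \<le> q" "q < 1"
  shows "summable (\<lambda>k. q ^ (k choose 2) * D ^ k :: real)"
proof -
  have "(\<lambda>j. \<bar>D\<bar> * q ^ j) \<longlonglongrightarrow> \<bar>D\<bar> * 0"
    using assms by (intro tendsto_intros LIMSEQ_power_zero) auto
  then have "eventually (\<lambda>j. \<bar>D\<bar> * q ^ j < 1/2) sequentially"
    by (intro order_tendstoD) auto
  then obtain J where J: "\<And>j. j \<ge> J \<Longrightarrow> \<bar>D\<bar> * q ^ j \<le> 1/2"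
    unfolding eventually_sequentially by (meson less_imp_le)
  show ?thesis
  proof (rule summable_ratio_test[of "1/2" J])
    fix k assume "J \<le> k"
    have "Suc k choose 2 = k + (k choose 2)"
      using binomial_Suc_Suc[of k 1] by (simp add: numeral_2_eq_2)
    then have "norm (q ^ (Suc k choose 2) * D ^ Suc k) = (\<bar>D\<bar> * q ^ k) * norm (q ^ (k choose 2) * D ^ k)"
      using assms by (simp add: power_add abs_mult)
    also have "\<dots> \<le> 1/2 * norm (q ^ (k choose 2) * D ^ k)"
      using J[OF \<open>J \<le> k\<close>] by (intro mult_right_mono) auto
    finally show "norm (q ^ (Suc k choose 2) * D ^ Suc k) \<le> 1/2 * norm (q ^ (k choose 2) * D ^ k)" .
  qed simp
qed

text \<open>The part of the \<open>k\<close>-th coefficient of an \<open>r\<phi>s\<close> series that involves neither the argument nor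
  the numerator parameters; here \<open>\<sigma> = 1 + s - r\<close> and \<open>\<beta>\<close> is the first denominator parameter.\<close>
definition qhyp_coeff :: "complex \<Rightarrow> real \<Rightarrow> int \<Rightarrow> nat \<Rightarrow> complex" where
  "qhyp_coeff \<beta> q \<sigma> k = (-1) powi (\<sigma> * int k) * complex_of_real (q powi (\<sigma> * int (k choose 2)))
     / (qpoch \<beta> q k * qpoch (complex_of_real q) q k)"

lemma qhyp_coeff_add_one:
  assumes "q \<noteq> 0"
  shows "qhyp_coeff \<beta> q (\<sigma> + 1) k = (-1) ^ k * complex_of_real q ^ (k choose 2) * qhyp_coeff \<beta> q \<sigma> k"
  using assms by (simp add: qhyp_coeff_def distrib_right power_int_add)

lemma qhyp_q_neg_n_eq:
  assumes "0 < q"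
  shows "qhyp (qpow q (- of_nat n) # xs) (\<beta> # ys) q (complex_of_real q ^ n * w)
    = (\<Sum>k. ((\<Prod>j<k. complex_of_real q ^ n - complex_of_real q ^ j) * w ^ k)
          * (qpoch_list xs q k / qpoch_list ys q k)
          * qhyp_coeff \<beta> q (1 + int (length ys) - int (length xs)) k)"
proof -
  have "qhyp (qpow q (- of_nat n) # xs) (\<beta> # ys) q (complex_of_real q ^ n * w)
      = (\<Sum>k. (qpoch (qpow q (- of_nat n)) q k * (complex_of_real q ^ n) ^ k) * w ^ k
          * (qpoch_list xs q k / qpoch_list ys q k)
          * qhyp_coeff \<beta> q (1 + int (length ys) - int (length xs)) k)"
    unfolding qhyp_def qhyp_coeff_def by (simp add: divide_inverse power_mult_distrib add_diff_eq mult_ac)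
  then show ?thesis
    using assms by (simp add: qpow_minus_of_nat qpoch_inverse_mult_power)
qed

lemma norm_qpoch_list_divide_le:
  assumes "0 \<le> q" "q \<le> 1" "\<And>x. x \<in> set xs \<Longrightarrow> norm x \<le> 1/2" "\<And>y. y \<in> set ys \<Longrightarrow> norm y \<le> 1/2"
  shows "norm (qpoch_list xs q k / qpoch_list ys q k) \<le> (2 ^ (length xs + length ys)) ^ k"
proof -
  have "norm x \<le> 1" if "x \<in> set xs" for x
    using assms(3)[OF that] by simp
  then have "norm (qpoch_list xs q k / qpoch_list ys q k) \<le> (2 ^ length xs) ^ k / (1/2) ^ (length ys * k)"
    unfolding norm_divide using assms
    by (intro frac_le norm_qpoch_list_le norm_qpoch_list_ge) auto
  then show ?thesis
    by (simp add: power_add power_mult_distrib field_simps flip: power_mult)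
qed

lemma eventually_norm_qpoch_list_divide_le:
  assumes "0 \<le> q" "q \<le> 1"
    and X: "\<And>j. j \<in> set js \<Longrightarrow> X j \<longlonglongrightarrow> 0" and Y: "\<And>l. l \<in> set ls \<Longrightarrow> Y l \<longlonglongrightarrow> 0"
  shows "eventually (\<lambda>n. \<forall>k. norm (qpoch_list (map (\<lambda>j. X j n) js) q k / qpoch_list (map (\<lambda>l. Y l n) ls) q k)
           \<le> (2 ^ (length js + length ls)) ^ k) sequentially"
proof -
  have "eventually (\<lambda>n. (\<forall>j\<in>set js. norm (X j n) < 1/2) \<and> (\<forall>l\<in>set ls. norm (Y l n) < 1/2)) sequentially"
    using X Y by (intro eventually_conj eventually_ball_finite ballI order_tendstoD(2)[OF tendsto_norm_zero]) auto
  then show ?thesis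
  proof (rule eventually_mono)
    fix n
    assume "(\<forall>j\<in>set js. norm (X j n) < 1/2) \<and> (\<forall>l\<in>set ls. norm (Y l n) < 1/2)"
    then show "\<forall>k. norm (qpoch_list (map (\<lambda>j. X j n) js) q k / qpoch_list (map (\<lambda>l. Y l n) ls) q k)
        \<le> (2 ^ (length js + length ls)) ^ k"
      using norm_qpoch_list_divide_le[of q "map (\<lambda>j. X j n) js" "map (\<lambda>l. Y l n) ls"] assms(1,2)
      by fastforce
  qed
qed

lemma norm_qhyp_coeff_le:
  assumes "0 < q" "q < 1" "\<sigma> \<ge> 0" "\<And>j. \<beta> * complex_of_real q ^ j \<noteq> 1"
  obtains m where "m > 0" "\<And>k. norm (qhyp_coeff \<beta> q \<sigma> k) \<le> 4 ^ k / m"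
proof -
  obtain m1 where "m1 > 0" and m1: "\<And>k. m1 * (1/2) ^ k \<le> norm (qpoch \<beta> q k)"
    using qpoch_lower_bound[of q \<beta>] assms by auto
  have "complex_of_real q * complex_of_real q ^ j \<noteq> 1" for j
    using assms power_Suc_less_one[of q j] by (simp flip: of_real_power of_real_mult)
  then obtain m2 where "m2 > 0" and m2: "\<And>k. m2 * (1/2) ^ k \<le> norm (qpoch (complex_of_real q) q k)"
    using qpoch_lower_bound[of q "complex_of_real q"] assms by auto
  have "norm (qhyp_coeff \<beta> q \<sigma> k) \<le> 4 ^ k / (m1 * m2)" for k
  proof -
    have "q powi (\<sigma> * int (k choose 2)) \<le> 1"
      using assms by (intro power_int_le_one) auto
    then have "norm (qhyp_coeff \<beta> q \<sigma> k) \<le> 1 / ((m1 * (1/2) ^ k) * (m2 * (1/2) ^ k))"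
      unfolding qhyp_coeff_def using assms m1 m2 \<open>m1 > 0\<close> \<open>m2 > 0\<close>
      by (auto simp: norm_mult norm_divide norm_power_int intro!: frac_le mult_mono)
    also have "\<dots> = 4 ^ k / (m1 * m2)"
      by (simp add: field_simps flip: power_mult_distrib)
    finally show ?thesis .
  qed
  with \<open>m1 > 0\<close> \<open>m2 > 0\<close> show ?thesis
    using that[of "m1 * m2"] by auto
qed

lemma qhyp_q_neg_n_tendsto:
  fixes q :: real and \<beta> L :: complex and \<mu> :: "nat \<Rightarrow> complex"
    and X :: "'i \<Rightarrow> nat \<Rightarrow> complex" and Y :: "'j \<Rightarrow> nat \<Rightarrow> complex"
  assumes q: "0 < q" "q < 1"
    and \<beta>: "\<And>j. \<beta> * complex_of_real q ^ j \<noteq> 1"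
    and X: "\<And>j. j \<in> set js \<Longrightarrow> X j \<longlonglongrightarrow> 0"
    and Y: "\<And>l. l \<in> set ls \<Longrightarrow> Y l \<longlonglongrightarrow> 0"
    and len: "length js \<le> length ls + 1"
    and \<mu>: "\<mu> \<longlonglongrightarrow> L"
  defines "T \<equiv> \<lambda>k. qhyp_coeff \<beta> q (2 + int (length ls) - int (length js)) k * L ^ k"
  shows "summable T \<and>
    (\<lambda>n. qhyp (qpow q (- of_nat n) # map (\<lambda>j. X j n) js) (\<beta> # map (\<lambda>l. Y l n) ls) q
               (complex_of_real q ^ n * \<mu> n))
    \<longlonglongrightarrow> (\<Sum>k. T k)"
proof -
  define \<sigma> where "\<sigma> = 1 + int (length ls) - int (length js)"
  define W where "W n k = (\<Prod>j<k. complex_of_real q ^ n - complex_of_real q ^ j) * \<mu> n ^ k" for n k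
  define R where "R n k = qpoch_list (map (\<lambda>j. X j n) js) q k / qpoch_list (map (\<lambda>l. Y l n) ls) q k" for n k
  define f where "f k n = W n k * R n k * qhyp_coeff \<beta> q \<sigma> k" for k n
  have R_lim: "(\<lambda>n. R n k) \<longlonglongrightarrow> 1" for k
  proof -
    have "(\<lambda>n. R n k) \<longlonglongrightarrow> 1 / 1"
      unfolding R_def using X Y by (intro tendsto_divide tendsto_qpoch_list_zero) auto
    then show ?thesis
      by simp
  qed
  have T_eq: "T k = (-1) ^ k * complex_of_real q ^ (k choose 2) * L ^ k * 1 * qhyp_coeff \<beta> q \<sigma> k" for k
    using q qhyp_coeff_add_one[of q \<beta> \<sigma> k] by (simp add: T_def \<sigma>_def add.commute add_diff_eq mult_ac)
  have f_lim: "(\<lambda>n. f k n) \<longlonglongrightarrow> T k" for k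
    unfolding f_def W_def T_eq using q by (intro tendsto_mult tendsto_prod_power_diff R_lim tendsto_power \<mu> tendsto_const) auto
  obtain B where "B > 0" and B: "\<And>n. norm (\<mu> n) \<le> B"
    using convergent_imp_Bseq[OF convergentI[OF \<mu>]] by (auto elim: BseqE)
  obtain N where R_bd: "\<And>n k. n \<ge> N \<Longrightarrow> norm (R n k) \<le> (2 ^ (length js + length ls)) ^ k"
    using eventually_norm_qpoch_list_divide_le[of q js X ls Y] q X Y
    unfolding R_def eventually_sequentially by (metis less_imp_le)
  obtain m where "m > 0" and m: "\<And>k. norm (qhyp_coeff \<beta> q \<sigma> k) \<le> 4 ^ k / m"
    using norm_qhyp_coeff_le[OF q _ \<beta>, of \<sigma>] len by (auto simp: \<sigma>_def)
  define M where "M k = q ^ (k choose 2) * (B * 2 ^ (length js + length ls) * 4) ^ k / m" for k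
  have "norm (f k n) \<le> M k" if "n \<ge> N" for n k
  proof -
    have "norm (W n k) \<le> q ^ (k choose 2) * B ^ k"
      unfolding W_def norm_mult norm_power using norm_prod_power_diff_le[of q n k] q B
      by (intro mult_mono power_mono) auto
    with R_bd[OF that] have "norm (f k n) \<le> (q ^ (k choose 2) * B ^ k) * (2 ^ (length js + length ls)) ^ k * (4 ^ k / m)"
      unfolding f_def norm_mult using q m \<open>B > 0\<close> by (intro mult_mono) auto
    then show ?thesis
      by (simp add: M_def power_mult_distrib)
  qed
  then have "eventually (\<lambda>(k, n). norm (f k n) \<le> M k) (at_top \<times>\<^sub>F sequentially)"
    unfolding eventually_prod_filter
    by (intro exI[of _ "\<lambda>_. True"] exI[of _ "\<lambda>n. n \<ge> N"]) (auto simp: eventually_sequentially)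
  moreover have "summable M"
    unfolding M_def using q by (intro summable_divide summable_power_choose_two) auto
  ultimately have "summable (\<lambda>k. norm (T k)) \<and> (\<lambda>n. \<Sum>k. f k n) \<longlonglongrightarrow> (\<Sum>k. T k)"
    using tannerys_theorem[of f T sequentially M] f_lim by auto
  moreover have "qhyp (qpow q (- of_nat n) # map (\<lambda>j. X j n) js) (\<beta> # map (\<lambda>l. Y l n) ls) q
      (complex_of_real q ^ n * \<mu> n) = (\<Sum>k. f k n)" for n
    using qhyp_q_neg_n_eq[OF q(1)] by (simp add: f_def W_def R_def \<sigma>_def)
  ultimately show ?thesis
    using summable_norm_cancel by auto
qed

lemma qnum_pos: "0 < q \<Longrightarrow> q < 1 \<Longrightarrow> 0 < a \<Longrightarrow> 0 < qnum q a"
  using powr_less_mono2[of a q 1] by (simp add: qnum_def)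

lemma tendsto_qnum_of_nat:
  assumes "0 < q" "q < 1"
  shows "(\<lambda>n. qnum q (real n)) \<longlonglongrightarrow> 1 / (1 - q)"
proof -
  have "(\<lambda>n. (1 - q ^ n) / (1 - q)) \<longlonglongrightarrow> (1 - 0) / (1 - q)"
    using assms by (intro tendsto_intros LIMSEQ_power_zero) auto
  then show ?thesis
    using assms by (simp add: qnum_def powr_realpow)
qed

lemma tendsto_qnum_ratio:
  assumes "0 < q" "q < 1" "0 < c"
  shows "(\<lambda>n. (1 - q powr (c * real n)) / (1 - q powr c)) \<longlonglongrightarrow> 1 / ((1 - q) * qnum q c)"
proof -
  have "(\<lambda>n. (1 - (q powr c) ^ n) / (1 - q powr c)) \<longlonglongrightarrow> (1 - 0) / (1 - q powr c)"
    using assms powr_less_mono2[of c q 1] by (intro tendsto_intros LIMSEQ_power_zero) auto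
  then show ?thesis
    using assms by (simp add: qnum_def powr_powr mult.commute flip: powr_realpow)
qed

lemma tendsto_scaled_lambda:
  assumes q: "0 < q" "q < 1" and "finite I" "finite J"
    and c: "\<And>l. l \<in> I \<Longrightarrow> 0 < c l" and a: "\<And>j. j \<in> J \<Longrightarrow> 0 < a j"
  shows "(\<lambda>n. q powr \<alpha> * (\<Prod>l\<in>I. (1 - q powr (c l * real n)) / (1 - q powr (c l)))
              / (qnum q (real n) * (\<Prod>j\<in>J. (1 - q powr (a j * real n)) / (1 - q powr (a j)))) * (q - 1))
    \<longlonglongrightarrow> - (q powr \<alpha> * (1 - q) powi (2 + int (card J) - int (card I))
              * ((\<Prod>j\<in>J. qnum q (a j)) / (\<Prod>l\<in>I. qnum q (c l))))"
proof -
  define u where "u = 1 - q"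
  have q_minus_one: "q - 1 = - u"
    by (simp add: u_def)
  define Pa where "Pa = (\<Prod>j\<in>J. qnum q (a j))"
  define Pc where "Pc = (\<Prod>l\<in>I. qnum q (c l))"
  have "u > 0" "Pa > 0" "Pc > 0"
    using q a c qnum_pos by (auto simp: u_def Pa_def Pc_def intro: prod_pos)
  have I_lim: "(\<lambda>n. \<Prod>l\<in>I. (1 - q powr (c l * real n)) / (1 - q powr (c l))) \<longlonglongrightarrow> (\<Prod>l\<in>I. 1 / (u * qnum q (c l)))"
    and J_lim: "(\<lambda>n. \<Prod>j\<in>J. (1 - q powr (a j * real n)) / (1 - q powr (a j))) \<longlonglongrightarrow> (\<Prod>j\<in>J. 1 / (u * qnum q (a j)))"
    unfolding u_def using q c a by (auto intro!: tendsto_prod tendsto_qnum_ratio)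
  have qnum_lim: "(\<lambda>n. qnum q (real n)) \<longlonglongrightarrow> 1 / u"
    unfolding u_def using q by (rule tendsto_qnum_of_nat)
  have "1 / u * (\<Prod>j\<in>J. 1 / (u * qnum q (a j))) \<noteq> 0"
    using \<open>u > 0\<close> a q qnum_pos by (force simp: prod_zero_iff \<open>finite J\<close>)
  then have "(\<lambda>n. q powr \<alpha> * (\<Prod>l\<in>I. (1 - q powr (c l * real n)) / (1 - q powr (c l)))
              / (qnum q (real n) * (\<Prod>j\<in>J. (1 - q powr (a j * real n)) / (1 - q powr (a j)))) * (q - 1))
      \<longlonglongrightarrow> q powr \<alpha> * (\<Prod>l\<in>I. 1 / (u * qnum q (c l))) / (1 / u * (\<Prod>j\<in>J. 1 / (u * qnum q (a j)))) * (q - 1)"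
    by (intro tendsto_mult tendsto_divide tendsto_const I_lim J_lim qnum_lim)
  also have "q powr \<alpha> * (\<Prod>l\<in>I. 1 / (u * qnum q (c l))) / (1 / u * (\<Prod>j\<in>J. 1 / (u * qnum q (a j)))) * (q - 1)
      = - (q powr \<alpha> * (u ^ (card J + 2) / u ^ card I) * (Pa / Pc))"
    using \<open>u > 0\<close> \<open>Pa > 0\<close> \<open>Pc > 0\<close>
    unfolding q_minus_one by (simp add: Pa_def Pc_def prod_dividef prod.distrib power_add power2_eq_square field_simps)
  also have "u ^ (card J + 2) / u ^ card I = u powi (2 + int (card J) - int (card I))"
    using \<open>u > 0\<close> by (simp add: power_int_diff add.commute flip: power_int_of_nat)
  finally show ?thesis
    by (simp add: u_def Pa_def Pc_def)
qed

lemma qhyp_coeff_mult_power: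
  fixes r s :: int
  assumes "0 < q"
  shows "qhyp_coeff \<beta> q (2 + s - r) k * (- complex_of_real (q powr \<alpha> * (1 - q) powi (2 + r - s) * A) * z) ^ k
    = (-1) powi ((1 + r - s) * int k) * complex_of_real (q powi ((2 + s - r) * int (k choose 2)) * A ^ k)
      * z ^ k * complex_of_real (q powr (\<alpha> * real k) * (1 - q) powi ((2 + r - s) * int k))
      / (qpoch \<beta> q k * qpoch (complex_of_real q) q k)"
proof -
  have power_k: "(q powr \<alpha> * (1 - q) powi (2 + r - s) * A) ^ k = q powr (\<alpha> * real k) * (1 - q) powi ((2 + r - s) * int k) * A ^ k"
    using assms by (simp add: power_mult_distrib powr_power power_int_power' mult.commute)
  have "(- complex_of_real (q powr \<alpha> * (1 - q) powi (2 + r - s) * A) * z) ^ k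
      = (-1) ^ k * complex_of_real (q powr (\<alpha> * real k) * (1 - q) powi ((2 + r - s) * int k) * A ^ k) * z ^ k"
    by (subst power_mult_distrib, subst power_minus, subst of_real_power[symmetric]) (simp only: power_k)
  moreover have "(1 + r - s) * int k = int k + (2 + s - r) * int k + 2 * ((r - s - 1) * int k)"
    by (simp add: algebra_simps)
  then have "((-1) powi ((1 + r - s) * int k) :: complex) = (-1) ^ k * (-1) powi ((2 + s - r) * int k)"
    by (simp add: power_int_add power_int_mult)
  ultimately show ?thesis
    unfolding qhyp_coeff_def
    by (simp only: of_real_mult divide_inverse mult_ac)
qed

lemma qpow_mult_power_neq_one:
  assumes "0 < q" "q < 1" "\<forall>m::int. m \<le> 0 \<longrightarrow> \<alpha> \<noteq> of_int m"
  shows "qpow q (complex_of_real \<alpha>) * complex_of_real q ^ j \<noteq> 1"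
proof
  assume "qpow q (complex_of_real \<alpha>) * complex_of_real q ^ j = 1"
  then have "q powr (\<alpha> + real j) = 1"
    using assms by (simp add: qpow_of_real powr_add powr_realpow flip: of_real_power of_real_mult)
  then show False
    using assms(3)[rule_format, of "- int j"] assms(1,2) by (simp add: powr_eq_one_iff_gen)
qed

theorem proposition4:
  fixes q \<alpha> :: real and r s :: nat
    and a c :: "nat \<Rightarrow> real" and b d :: "nat \<Rightarrow> complex"
    and z :: complex
  assumes q: "0 < q" "q < 1"
    and rs: "r \<ge> 1" "s \<ge> 1" "r - 1 \<le> s"
    and alpha: "\<forall>m::int. m \<le> 0 \<longrightarrow> \<alpha> \<noteq> of_int m"
    and a_pos: "\<forall>j\<in>{1..r-1}. a j > 0"
    and c_pos: "\<forall>l\<in>{1..s-1}. c l > 0"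
    and ab: "\<forall>j\<in>{1..r-1}. \<forall>n::nat. n \<ge> 1 \<longrightarrow>
              (\<forall>m::int. m \<le> 0 \<longrightarrow> a j * real n + Re (b j) \<noteq> of_int m)"
    and cd: "\<forall>l\<in>{1..s-1}. \<forall>n::nat. n \<ge> 1 \<longrightarrow>
              (\<forall>m::int. m \<le> 0 \<longrightarrow> c l * real n + Re (d l) \<noteq> of_int m)"
  defines "lam \<equiv> (\<lambda>n::nat. q powr (real n + \<alpha>) * (\<Prod>l=1..s-1. (1 - q powr (c l * real n)) / (1 - q powr (c l)))
              / (qnum q (real n) * (\<Prod>j=1..r-1. (1 - q powr (a j * real n)) / (1 - q powr (a j))))
              * (q - 1))"
    and "T \<equiv> (\<lambda>k::nat. (-1) powi ((1 + int r - int s) * int k)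
              * complex_of_real (q powi ((2 + int s - int r) * int (k choose 2)) * ((\<Prod>j=1..r-1. qnum q (a j)) / (\<Prod>l=1..s-1. qnum q (c l))) ^ k)
              * z ^ k * complex_of_real (q powr (\<alpha> * real k) * (1 - q) powi ((2 + int r - int s) * int k))
              / (qpoch (qpow q (complex_of_real \<alpha>)) q k * qpoch (complex_of_real q) q k))"
  shows "summable T \<and>
    (\<lambda>n. qhyp (qpow q (- of_nat n) # map (\<lambda>j. qpow q (of_real (a j) * of_nat n + b j)) [1..<r])
               (qpow q (complex_of_real \<alpha>) # map (\<lambda>l. qpow q (of_real (c l) * of_nat n + d l)) [1..<s])
               q (complex_of_real (lam n) * z))
    \<longlonglongrightarrow> (\<Sum>k. T k)"
proof -
  define A where "A = (\<Prod>j=1..r-1. qnum q (a j)) / (\<Prod>l=1..s-1. qnum q (c l))"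
  define \<mu> where "\<mu> = (\<lambda>n::nat. q powr \<alpha> * (\<Prod>l=1..s-1. (1 - q powr (c l * real n)) / (1 - q powr (c l)))
      / (qnum q (real n) * (\<Prod>j=1..r-1. (1 - q powr (a j * real n)) / (1 - q powr (a j)))) * (q - 1))"
  define L where "L = - (q powr \<alpha> * (1 - q) powi (2 + int r - int s) * A)"
  have "\<mu> \<longlonglongrightarrow> L"
    using tendsto_scaled_lambda[OF q, of "{1..s-1}" "{1..r-1}" c a \<alpha>] a_pos c_pos rs
    by (simp add: \<mu>_def L_def A_def of_nat_diff add_diff_eq)
  then have \<mu>_lim: "(\<lambda>n. complex_of_real (\<mu> n) * z) \<longlonglongrightarrow> complex_of_real L * z"
    by (intro tendsto_intros)
  have lam_eq: "complex_of_real q ^ n * (complex_of_real (\<mu> n) * z) = complex_of_real (lam n) * z" for n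
    using q by (simp add: lam_def \<mu>_def powr_add powr_realpow)
  have T_eq: "qhyp_coeff (qpow q (complex_of_real \<alpha>)) q (2 + int (length [1..<s]) - int (length [1..<r])) k
      * (complex_of_real L * z) ^ k = T k" for k
  proof -
    have "2 + int (length [1..<s]) - int (length [1..<r]) = 2 + int s - int r"
      using rs by auto
    then show ?thesis
      unfolding T_def A_def[symmetric] L_def of_real_minus
      by (simp only: qhyp_coeff_mult_power[OF q(1)])
  qed
  have X: "(\<lambda>n. qpow q (of_real (a j) * of_nat n + b j)) \<longlonglongrightarrow> 0" if "j \<in> set [1..<r]" for j
    using that a_pos q by (intro tendsto_qpow_linear) auto
  have Y: "(\<lambda>n. qpow q (of_real (c l) * of_nat n + d l)) \<longlonglongrightarrow> 0" if "l \<in> set [1..<s]" for l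
    using that c_pos q by (intro tendsto_qpow_linear) auto
  have "length [1..<r] \<le> length [1..<s] + 1"
    using rs by simp
  from qhyp_q_neg_n_tendsto[OF q qpow_mult_power_neq_one[OF q alpha] X Y this \<mu>_lim] show ?thesis
    unfolding lam_eq T_eq .
qed

end
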